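(* Let $\mathcal{A}$ be a finite set of positive integers, let $w \leqslant z$ be real numbers, let $0 < m_0 \leqslant 1$, and let $m_1, m_2, m_3, m_4$ be real numbers with $(m_1, m_2) \in \mathcal{U}$ and $(m_3, m_4) \in \mathcal{U}$. Writing $N^r_5 = \sum_{0 \leqslant i_1 < \cdots < i_r \leqslant 4} m_{i_1}\cdots m_{i_r}$ and $Q = m_0m_1m_2m_3m_4$, we have $$ S(\mathcal{A}, z) \geqslant S(\mathcal{A}, w) - \frac{N^4_5 - N^3_5 + N^2_5 - N^1_5 + 1}{Q} \sum_{w \leqslant p_1 < z} S(\mathcal{A}_{p_1}, w) + \frac{2(N^3_5 - 3N^2_5 + 7N^1_5 - 15)}{Q} \sum_{w \leqslant p_2 < p_1 < z} S(\mathcal{A}_{p_1p_2}, w) $$ $$ - \frac{6(N^2_5 - 6N^1_5 + 25)}{Q} \sum_{w \leqslant p_3 < p_2 < p_1 < z} S(\mathcal{A}_{p_1p_2p_3}, w) + \frac{24(N^1_5 - 10)}{Q} \sum_{w \leqslant p_4 < \cdots < p_1 < z} S(\mathcal{A}_{p_1p_2p_3p_4}, w) - \frac{120}{Q} \sum_{w \leqslant p_5 < \cdots < p_1 < z} S(\mathcal{A}_{p_1\cdots p_5}, w). $$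
   Context: Throughout, $p, p_1, p_2, \dots$ denote prime numbers. For a finite set $\mathcal{A}$ of positive integers and a positive integer $d$, $\mathcal{A}_d = \{a : ad \in \mathcal{A}\}$. For real $z$, $S(\mathcal{A}, z)$ denotes the number of $a \in \mathcal{A}$ having no prime factor less than $z$. Let $T = (0,1] \cup [2,3] \cup [4,5] \cup \cdots$, i.e. $T$ is the union of $(0,1]$ and the intervals $[k-1,k]$ over all odd integers $k \geqslant 3$, and let $\mathcal{U} = \{(x_1, x_2) : x_1, x_2 \in T,\ |x_1 - x_2| \leqslant 1\}$. *)

theory Defs
  imports "HOL-Computational_Algebra.Primes" Complex_Main
begin

definition sift :: "nat set \<Rightarrow> real \<Rightarrow> nat" where
  "sift A z = card {a \<in> A. \<forall>p. prime p \<and> p dvd a \<longrightarrow> z \<le> real p}"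

definition restr :: "nat set \<Rightarrow> nat \<Rightarrow> nat set" where
  "restr A d = {a. a * d \<in> A}"

definition primes_in :: "real \<Rightarrow> real \<Rightarrow> nat set" where
  "primes_in w z = {p. prime p \<and> w \<le> real p \<and> real p < z}"

definition T_set :: "real set" where
  "T_set = {x. 0 < x \<and> x \<le> 1} \<union> {x. \<exists>k::nat. odd k \<and> 3 \<le> k \<and> real k - 1 \<le> x \<and> x \<le> real k}"

definition U_set :: "(real \<times> real) set" where
  "U_set = {(x1, x2). x1 \<in> T_set \<and> x2 \<in> T_set \<and> \<bar>x1 - x2\<bar> \<le> 1}"

definition N5 :: "(nat \<Rightarrow> real) \<Rightarrow> nat \<Rightarrow> real" where
  "N5 m r = (\<Sum>I \<in> {I. I \<subseteq> {0..4} \<and> card I = r}. \<Prod>i\<in>I. m i)"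

end

theory Submission
  imports Defs
begin

(* For a in A let n(a) be the number of primes p in [w, z) dividing a. Writing
   S(A_d, w) as a sum over a in A, an element a contributes to the k-th nested prime sum
   only if it is w-rough, and then exactly once for every chain p_k < ... < p_1 of its
   prime divisors in [w, z), that is C(n(a), k) times. So the right-hand side is the sum,
   over the w-rough a in A, of W(n(a)), where W(n) = 1 - c_1 C(n,1) + ... - c_5 C(n,5) and
   c_1, ..., c_5 are the coefficients of the statement.
   Expanding the binomials and using Vieta's formulas for the N^r_5 gives
   Q W(n) = (m_0 - n)(m_1 - n)(m_2 - n)(m_3 - n)(m_4 - n). For n = 0 the weight is 1 and a
   is z-rough. For n >= 1 the first factor is <= 0, while (m_1, m_2) in U means that no
   integer lies strictly between m_1 and m_2, so (m_1 - n)(m_2 - n) >= 0, and likewise for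
   (m_3, m_4); hence W(n) <= 0. *)

definition rough :: "real \<Rightarrow> nat \<Rightarrow> bool" where
  "rough w a \<longleftrightarrow> (\<forall>p. prime p \<and> p dvd a \<longrightarrow> w \<le> real p)"

lemma rough_mult [simp]: "rough w (a * b) \<longleftrightarrow> rough w a \<and> rough w b"
  unfolding rough_def by (auto simp: prime_dvd_mult_iff)

lemma rough_prime: "prime p \<Longrightarrow> w \<le> real p \<Longrightarrow> rough w p"
  unfolding rough_def using primes_dvd_imp_eq by blast

lemma sift_eq_card_rough: "sift A w = card {a \<in> A. rough w a}"
  unfolding sift_def rough_def ..

lemma sift_eq_sum_rough: "finite A \<Longrightarrow> real (sift A w) = (\<Sum>a\<in>A. of_bool (rough w a))"
  by (simp add: sift_eq_card_rough Int_def)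

definition rough_cofactor :: "real \<Rightarrow> nat \<Rightarrow> nat \<Rightarrow> bool" where
  "rough_cofactor w d a \<longleftrightarrow> d dvd a \<and> rough w (a div d)"

lemma rough_cofactor_1 [simp]: "rough_cofactor w 1 a \<longleftrightarrow> rough w a"
  unfolding rough_cofactor_def by simp

lemma mult_prime_dvd_iff:
  fixes p m a :: nat
  assumes "prime p" and "\<not> p dvd m"
  shows "m * p dvd a \<longleftrightarrow> m dvd a \<and> p dvd a"
  using assms by (metis coprime_commute divides_mult dvd_mult_left dvd_mult_right prime_imp_coprime)

lemma rough_cofactor_mult_prime:
  assumes "prime p" and "w \<le> real p" and "\<not> p dvd d"
  shows "rough_cofactor w (d * p) a \<longleftrightarrow> rough_cofactor w d a \<and> p dvd a"
proof (cases "d * p dvd a")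
  case True
  then have "a div d = p * (a div (d * p))"
    using prime_gt_0_nat[OF assms(1)] by (elim dvdE) (cases "d = 0", simp_all add: mult.assoc)
  then have "rough w (a div d) \<longleftrightarrow> rough w (a div (d * p))"
    using rough_prime[OF assms(1,2)] by simp
  then show ?thesis
    using True unfolding rough_cofactor_def by (auto intro: dvd_mult_left dvd_mult_right)
next
  case False
  then show ?thesis
    using mult_prime_dvd_iff[OF assms(1,3)] unfolding rough_cofactor_def by blast
qed

(* The hypothesis 0 \<notin> A is needed only for d = 0, where it makes restr A 0 empty. *)
lemma sift_restr_eq_sum:
  assumes "finite A" and "0 \<notin> A"
  shows "real (sift (restr A d) w) = (\<Sum>a\<in>A. of_bool (rough_cofactor w d a))"
proof -
  have "0 < d" if "b * d \<in> A" for b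
    using that assms(2) by (cases d) auto
  then have "bij_betw (\<lambda>b. b * d)
      {b \<in> restr A d. rough w b} {a \<in> A. d dvd a \<and> rough w (a div d)}"
    by (intro bij_betw_byWitness[where f' = "\<lambda>a. a div d"]) (auto simp: restr_def)
  then have "sift (restr A d) w = card {a \<in> A. d dvd a \<and> rough w (a div d)}"
    unfolding sift_eq_card_rough by (rule bij_betw_same_card)
  then show ?thesis
    using assms(1) by (simp add: rough_cofactor_def Int_def)
qed

lemma sum_card_less_choose:
  fixes D :: "'a :: linorder set"
  assumes "finite D"
  shows "(\<Sum>p\<in>D. card {q \<in> D. q < p} choose j) = card D choose Suc j"
  using assms
proof (induction D rule: finite_linorder_max_induct)
  case (insert b D)
  have "b \<notin> D" and below_b: "{q \<in> insert b D. q < b} = D"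
    using insert.hyps(2) by auto
  have below_D: "(\<Sum>p\<in>D. card {q \<in> insert b D. q < p} choose j)
      = (\<Sum>p\<in>D. card {q \<in> D. q < p} choose j)"
    using insert.hyps(2)
    by (intro sum.cong refl arg_cong2[where f = "(choose)"] arg_cong[where f = card]) auto
  have "(\<Sum>p\<in>insert b D. card {q \<in> insert b D. q < p} choose j)
      = (card D choose j) + (\<Sum>p\<in>D. card {q \<in> D. q < p} choose j)"
    unfolding sum.insert[OF insert.hyps(1) \<open>b \<notin> D\<close>] below_b below_D ..
  also have "\<dots> = card (insert b D) choose Suc j"
    using insert.IH insert.hyps(1) \<open>b \<notin> D\<close> by simp
  finally show ?case .
qed simp

lemma sum_of_bool_card_less_choose:
  fixes S :: "'a :: linorder set"
  assumes "finite S"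
  shows "(\<Sum>p\<in>S. of_bool (D p) * real (card {q \<in> S. D q \<and> q < p} choose k))
       = real (card {q \<in> S. D q} choose Suc k)"
proof -
  have "(\<Sum>p\<in>S. of_bool (D p) * real (card {q \<in> S. D q \<and> q < p} choose k))
      = real (\<Sum>p\<in>S \<inter> {x. D x}. card {q \<in> S \<inter> {x. D x}. q < p} choose k)"
    using assms by (simp add: Int_def conj_assoc)
  also have "\<dots> = real (card (S \<inter> {x. D x}) choose Suc k)"
    using assms by (subst sum_card_less_choose) auto
  finally show ?thesis
    by (simp add: Int_def)
qed

(* chain_sum P k S d f is the sum of f (d * p_1 * ... * p_k) over p_1 > ... > p_k with p_1 in S
   and p_2, ..., p_k in P; the nested prime sums of the theorem are chain_sum P k P 1. *)
fun chain_sum ::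
  "nat set \<Rightarrow> nat \<Rightarrow> nat set \<Rightarrow> nat \<Rightarrow> (nat \<Rightarrow> 'a :: comm_monoid_add) \<Rightarrow> 'a"
where
  "chain_sum P 0 S d f = f d"
| "chain_sum P (Suc k) S d f = (\<Sum>p\<in>S. chain_sum P k {q \<in> P. q < p} (d * p) f)"

lemma chain_sum_1 [simp]: "chain_sum P 1 S d f = (\<Sum>p\<in>S. f (d * p))"
  by simp

lemma chain_sum_numeral [simp]:
  "chain_sum P (numeral k) S d f = (\<Sum>p\<in>S. chain_sum P (pred_numeral k) {q \<in> P. q < p} (d * p) f)"
  by (simp add: numeral_eq_Suc)

lemma chain_sum_sum:
  "chain_sum P k S d (\<lambda>d. \<Sum>a\<in>A. f a d) = (\<Sum>a\<in>A. chain_sum P k S d (f a))"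
  by (induction k arbitrary: S d) (simp_all add: sum.swap[where B = A])

context
  fixes P :: "nat set" and w :: real
  assumes finite_P: "finite P" and P_primes: "\<And>p. p \<in> P \<Longrightarrow> prime p \<and> w \<le> real p"
begin

(* The hypotheses on S and d form the induction invariant: they ensure that the next prime
   of a chain never divides the product accumulated so far (rough_cofactor_mult_prime). *)
lemma chain_sum_rough_cofactor:
  assumes S: "S \<subseteq> P" "\<And>p q. p \<in> S \<Longrightarrow> q \<in> P \<Longrightarrow> q < p \<Longrightarrow> q \<in> S"
    and d: "\<And>p. p \<in> S \<Longrightarrow> \<not> p dvd d"
  shows "chain_sum P k S d (\<lambda>d. of_bool (rough_cofactor w d a))
       = of_bool (rough_cofactor w d a) * real (card {p \<in> S. p dvd a} choose k)"
  using S d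
proof (induction k arbitrary: S d)
  case (Suc k)
  have "finite S"
    using Suc.prems(1) finite_P by (rule finite_subset)
  have "chain_sum P k {q \<in> P. q < p} (d * p) (\<lambda>d. of_bool (rough_cofactor w d a))
      = of_bool (rough_cofactor w d a)
        * (of_bool (p dvd a) * real (card {q \<in> S. q dvd a \<and> q < p} choose k))"
    if "p \<in> S" for p
  proof -
    have p: "prime p" "w \<le> real p" "p \<in> P"
      using that Suc.prems(1) P_primes by auto
    have "\<not> q dvd d * p" if "q \<in> P" "q < p" for q
      using that Suc.prems P_primes p(1) \<open>p \<in> S\<close>
      by (metis prime_dvd_mult_iff primes_dvd_imp_eq less_irrefl)
    then have "chain_sum P k {q \<in> P. q < p} (d * p) (\<lambda>d. of_bool (rough_cofactor w d a))
      = of_bool (rough_cofactor w (d * p) a) * real (card {q \<in> {q \<in> P. q < p}. q dvd a} choose k)"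
      by (intro Suc.IH) auto
    also have "{q \<in> {q \<in> P. q < p}. q dvd a} = {q \<in> S. q dvd a \<and> q < p}"
      using Suc.prems(1,2) \<open>p \<in> S\<close> by auto
    finally show ?thesis
      using rough_cofactor_mult_prime[OF p(1,2) Suc.prems(3)[OF \<open>p \<in> S\<close>]] by simp
  qed
  then have "chain_sum P (Suc k) S d (\<lambda>d. of_bool (rough_cofactor w d a))
      = of_bool (rough_cofactor w d a)
        * (\<Sum>p\<in>S. of_bool (p dvd a) * real (card {q \<in> S. q dvd a \<and> q < p} choose k))"
    by (simp add: sum_distrib_left)
  then show ?case
    using sum_of_bool_card_less_choose[OF \<open>finite S\<close>] by simp
qed simp

lemma chain_sum_sift_restr:
  assumes "finite A" and "0 \<notin> A"
  shows "chain_sum P k P 1 (\<lambda>d. real (sift (restr A d) w))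
       = (\<Sum>a\<in>A. of_bool (rough w a) * real (card {p \<in> P. p dvd a} choose k))"
proof -
  have "chain_sum P k P 1 (\<lambda>d. of_bool (rough_cofactor w d a))
      = of_bool (rough w a) * real (card {p \<in> P. p dvd a} choose k)" for a
    unfolding rough_cofactor_1[symmetric]
    by (rule chain_sum_rough_cofactor) (auto dest!: P_primes)
  then show ?thesis
    by (simp add: sift_restr_eq_sum[OF assms] chain_sum_sum)
qed

end

lemma prod_diff_eq_sum_elementary_symmetric:
  fixes m :: "'b \<Rightarrow> 'a :: comm_ring_1"
  assumes "finite I"
  shows "(\<Prod>i\<in>I. m i - x)
       = (\<Sum>r\<le>card I. (\<Sum>J\<in>{J. J \<subseteq> I \<and> card J = r}. prod m J) * (- x) ^ (card I - r))"
proof -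
  have "(\<Prod>i\<in>I. m i - x) = (\<Sum>J\<in>Pow I. prod m J * (- x) ^ (card I - card J))"
    using prod_add[OF assms, of m "\<lambda>_. - x"] assms
    by (simp add: card_Diff_subset finite_subset)
  also have "\<dots> = (\<Sum>r\<le>card I. \<Sum>J\<in>{J. J \<in> Pow I \<and> card J = r}.
      prod m J * (- x) ^ (card I - card J))"
    using assms by (intro sum.group[symmetric]) (auto intro: card_mono)
  also have "\<dots>
      = (\<Sum>r\<le>card I. (\<Sum>J\<in>{J. J \<subseteq> I \<and> card J = r}. prod m J) * (- x) ^ (card I - r))"
    by (simp add: sum_distrib_right)
  finally show ?thesis .
qed

lemma N5_0: "N5 m 0 = 1"
proof -
  have "{I. I \<subseteq> {0..4::nat} \<and> card I = 0} = {{}}"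
    using finite_subset[of _ "{0..4::nat}"] by fastforce
  then show ?thesis
    unfolding N5_def by simp
qed

lemma N5_5: "N5 m 5 = m 0 * m 1 * m 2 * m 3 * m 4"
proof -
  have "{I. I \<subseteq> {0..4::nat} \<and> card I = card {0..4::nat}} = {{0..4}}"
    using card_subset_eq[of "{0..4::nat}"] by blast
  then show ?thesis
    unfolding N5_def by (simp add: eval_nat_numeral)
qed

lemma prod_diff_eq_N5:
  "(m 0 - x) * (m 1 - x) * (m 2 - x) * (m 3 - x) * (m 4 - x)
   = N5 m 5 - N5 m 4 * x + N5 m 3 * x ^ 2 - N5 m 2 * x ^ 3 + N5 m 1 * x ^ 4 - x ^ 5"
proof -
  have "(\<Prod>i\<in>{0..4}. m i - x) = (\<Sum>r\<le>5. N5 m r * (- x) ^ (5 - r))"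
    unfolding N5_def by (subst prod_diff_eq_sum_elementary_symmetric) auto
  then show ?thesis
    by (simp add: eval_nat_numeral N5_0 algebra_simps)
qed

definition sieve_weight :: "(nat \<Rightarrow> real) \<Rightarrow> nat \<Rightarrow> real" where
  "sieve_weight m n = (let Q = m 0 * m 1 * m 2 * m 3 * m 4 in
     1 - (N5 m 4 - N5 m 3 + N5 m 2 - N5 m 1 + 1) / Q * real (n choose 1)
     + 2 * (N5 m 3 - 3 * N5 m 2 + 7 * N5 m 1 - 15) / Q * real (n choose 2)
     - 6 * (N5 m 2 - 6 * N5 m 1 + 25) / Q * real (n choose 3)
     + 24 * (N5 m 1 - 10) / Q * real (n choose 4)
     - 120 / Q * real (n choose 5))"

lemma sieve_weight_eq_prod:
  assumes Q: "Q = m 0 * m 1 * m 2 * m 3 * m 4" "Q \<noteq> 0"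
  shows "sieve_weight m n = (m 0 - n) * (m 1 - n) * (m 2 - n) * (m 3 - n) * (m 4 - n) / Q"
proof -
  define x where "x = real n"
  have binomial_poly:
    "real (n choose 1) = x"
    "real (n choose 2) = x * (x - 1) / 2"
    "real (n choose 3) = x * (x - 1) * (x - 2) / 6"
    "real (n choose 4) = x * (x - 1) * (x - 2) * (x - 3) / 24"
    "real (n choose 5) = x * (x - 1) * (x - 2) * (x - 3) * (x - 4) / 120"
    unfolding x_def
    by (simp_all add: binomial_gbinomial gbinomial_prod_rev eval_nat_numeral fact_numeral algebra_simps)
  have "Q * sieve_weight m n = Q - (N5 m 4 - N5 m 3 + N5 m 2 - N5 m 1 + 1) * x
      + (N5 m 3 - 3 * N5 m 2 + 7 * N5 m 1 - 15) * (x * (x - 1))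
      - (N5 m 2 - 6 * N5 m 1 + 25) * (x * (x - 1) * (x - 2))
      + (N5 m 1 - 10) * (x * (x - 1) * (x - 2) * (x - 3))
      - x * (x - 1) * (x - 2) * (x - 3) * (x - 4)"
    unfolding sieve_weight_def Let_def Q(1)[symmetric] binomial_poly
    using Q(2) by (simp add: field_simps)
  also have "\<dots> = (m 0 - x) * (m 1 - x) * (m 2 - x) * (m 3 - x) * (m 4 - x)"
    unfolding prod_diff_eq_N5 N5_5 Q(1) by algebra
  finally show ?thesis
    using Q(2) unfolding x_def by (simp add: field_simps)
qed

lemma sum_mult_sieve_weight:
  fixes f :: "'a \<Rightarrow> real" and m :: "nat \<Rightarrow> real"
  defines "Q \<equiv> m 0 * m 1 * m 2 * m 3 * m 4"
  shows "(\<Sum>a\<in>A. f a * sieve_weight m (n a)) = (\<Sum>a\<in>A. f a)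
    - (N5 m 4 - N5 m 3 + N5 m 2 - N5 m 1 + 1) / Q * (\<Sum>a\<in>A. f a * real (n a choose 1))
    + 2 * (N5 m 3 - 3 * N5 m 2 + 7 * N5 m 1 - 15) / Q * (\<Sum>a\<in>A. f a * real (n a choose 2))
    - 6 * (N5 m 2 - 6 * N5 m 1 + 25) / Q * (\<Sum>a\<in>A. f a * real (n a choose 3))
    + 24 * (N5 m 1 - 10) / Q * (\<Sum>a\<in>A. f a * real (n a choose 4))
    - 120 / Q * (\<Sum>a\<in>A. f a * real (n a choose 5))"
proof -
  have "(\<Sum>a\<in>A. f a * (1 - c1 * b1 a + c2 * b2 a - c3 * b3 a + c4 * b4 a - c5 * b5 a))
      = (\<Sum>a\<in>A. f a) - c1 * (\<Sum>a\<in>A. f a * b1 a) + c2 * (\<Sum>a\<in>A. f a * b2 a)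
        - c3 * (\<Sum>a\<in>A. f a * b3 a) + c4 * (\<Sum>a\<in>A. f a * b4 a) - c5 * (\<Sum>a\<in>A. f a * b5 a)"
    for c1 c2 c3 c4 c5 :: real and b1 b2 b3 b4 b5 :: "'a \<Rightarrow> real"
    by (simp add: sum.distrib sum_subtractf sum_distrib_left ring_distribs mult_ac)
  then show ?thesis
    unfolding sieve_weight_def Let_def Q_def .
qed

lemma T_set_pos: "x \<in> T_set \<Longrightarrow> 0 < x"
  unfolding T_set_def by fastforce

lemma T_set_in_odd_interval:
  assumes "x \<in> T_set"
  obtains j :: nat where "odd j" and "real j - 1 \<le> x" and "x \<le> real j"
proof -
  consider "0 < x" "x \<le> 1" | k :: nat where "odd k" "real k - 1 \<le> x" "x \<le> real k"
    using assms unfolding T_set_def by blast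
  then show thesis
    by cases (use that[of 1] that in auto)
qed

lemma U_set_no_nat_between:
  assumes "(x, y) \<in> U_set" and "x < real n" and "real n < y"
  shows False
proof -
  have "x \<in> T_set" "y \<in> T_set" "y - x \<le> 1"
    using assms(1) unfolding U_set_def by auto
  then obtain j k :: nat where j: "odd j" "real j - 1 \<le> x" "x \<le> real j"
    and k: "odd k" "real k - 1 \<le> y" "y \<le> real k"
    by (metis T_set_in_odd_interval)
  have "j \<le> n" "n < k"
    using j k assms(2,3) by linarith+
  then have "j + 2 \<le> k"
    using j(1) k(1) by presburger
  then have "x = real j" and "y \<le> real (j + 1)"
    using j k \<open>y - x \<le> 1\<close> by linarith+
  then have "j < n" and "n < j + 1"
    using assms(2,3) by linarith+
  then show False
    by linarith
qed

lemma U_set_prod_nonneg: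
  assumes "(x, y) \<in> U_set"
  shows "0 \<le> (x - real n) * (y - real n)"
proof -
  have "(y, x) \<in> U_set"
    using assms unfolding U_set_def by auto
  then have "\<not> (x < real n \<and> real n < y)" and "\<not> (y < real n \<and> real n < x)"
    using assms U_set_no_nat_between by blast+
  then show ?thesis
    unfolding zero_le_mult_iff by arith
qed

lemma sieve_weight_le:
  assumes "0 < m 0" "m 0 \<le> 1" "(m 1, m 2) \<in> U_set" "(m 3, m 4) \<in> U_set"
  shows "sieve_weight m n \<le> of_bool (n = 0)"
proof (cases "n = 0")
  case True
  then show ?thesis
    by (simp add: sieve_weight_def eval_nat_numeral)
next
  case False
  define Q where "Q = m 0 * m 1 * m 2 * m 3 * m 4"
  have "0 < m 1" "0 < m 2" "0 < m 3" "0 < m 4"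
    using assms(3,4) T_set_pos unfolding U_set_def by auto
  then have "0 < Q"
    using assms(1) unfolding Q_def by simp
  have "0 \<le> (m 1 - n) * (m 2 - n) * ((m 3 - n) * (m 4 - n))"
    using U_set_prod_nonneg[OF assms(3)] U_set_prod_nonneg[OF assms(4)] by simp
  moreover have "m 0 - n \<le> 0"
    using False assms(2) by linarith
  ultimately have "(m 0 - n) * ((m 1 - n) * (m 2 - n) * ((m 3 - n) * (m 4 - n))) / Q \<le> 0"
    using \<open>0 < Q\<close> by (simp add: mult_nonpos_nonneg divide_nonpos_pos)
  then show ?thesis
    using False sieve_weight_eq_prod[OF Q_def] \<open>0 < Q\<close> by (simp add: mult.assoc)
qed

lemma finite_primes_in: "finite (primes_in w z)"
  unfolding primes_in_def
  by (rule finite_subset[of _ "{..<nat \<lceil>z\<rceil>}"]) (auto simp: zless_nat_eq_int_zless less_ceiling_iff)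

lemma rough_iff_no_prime_in:
  assumes "w \<le> z"
  shows "rough z a \<longleftrightarrow> rough w a \<and> card {p \<in> primes_in w z. p dvd a} = 0"
proof -
  have "rough z a \<longleftrightarrow> rough w a \<and> {p \<in> primes_in w z. p dvd a} = {}"
    using assms unfolding rough_def primes_in_def by (auto simp: not_less)
  then show ?thesis
    using finite_primes_in[of w z] by simp
qed

theorem theorem6:
  fixes A :: "nat set" and w z :: real and m :: "nat \<Rightarrow> real"
  assumes "finite A" and "\<forall>a\<in>A. 0 < a"
    and "w \<le> z"
    and "0 < m 0" and "m 0 \<le> 1"
    and "(m 1, m 2) \<in> U_set" and "(m 3, m 4) \<in> U_set"
  defines "Q \<equiv> m 0 * m 1 * m 2 * m 3 * m 4"
    and "P \<equiv> primes_in w z"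
  shows "real (sift A z) \<ge> real (sift A w)
    - (N5 m 4 - N5 m 3 + N5 m 2 - N5 m 1 + 1) / Q *
        (\<Sum>p1\<in>P. real (sift (restr A p1) w))
    + 2 * (N5 m 3 - 3 * N5 m 2 + 7 * N5 m 1 - 15) / Q *
        (\<Sum>p1\<in>P. \<Sum>p2\<in>{p\<in>P. p < p1}. real (sift (restr A (p1 * p2)) w))
    - 6 * (N5 m 2 - 6 * N5 m 1 + 25) / Q *
        (\<Sum>p1\<in>P. \<Sum>p2\<in>{p\<in>P. p < p1}. \<Sum>p3\<in>{p\<in>P. p < p2}.
           real (sift (restr A (p1 * p2 * p3)) w))
    + 24 * (N5 m 1 - 10) / Q *
        (\<Sum>p1\<in>P. \<Sum>p2\<in>{p\<in>P. p < p1}. \<Sum>p3\<in>{p\<in>P. p < p2}. \<Sum>p4\<in>{p\<in>P. p < p3}.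
           real (sift (restr A (p1 * p2 * p3 * p4)) w))
    - 120 / Q *
        (\<Sum>p1\<in>P. \<Sum>p2\<in>{p\<in>P. p < p1}. \<Sum>p3\<in>{p\<in>P. p < p2}. \<Sum>p4\<in>{p\<in>P. p < p3}.
           \<Sum>p5\<in>{p\<in>P. p < p4}. real (sift (restr A (p1 * p2 * p3 * p4 * p5)) w))"
proof -
  define n where "n a = card {p \<in> P. p dvd a}" for a
  have "finite P"
    unfolding P_def by (rule finite_primes_in)
  moreover have "\<And>p. p \<in> P \<Longrightarrow> prime p \<and> w \<le> real p"
    unfolding P_def primes_in_def by auto
  moreover have "0 \<notin> A"
    using assms(2) by blast
  ultimately have chains: "chain_sum P k P 1 (\<lambda>d. real (sift (restr A d) w))
      = (\<Sum>a\<in>A. of_bool (rough w a) * real (n a choose k))" for k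
    unfolding n_def by (rule chain_sum_sift_restr[OF _ _ assms(1)])
  have "of_bool (rough w a) * sieve_weight m (n a) \<le> of_bool (rough z a)" for a
    using sieve_weight_le[OF assms(4-7), of "n a"] rough_iff_no_prime_in[OF assms(3), of a]
    unfolding n_def P_def by (cases "rough w a") simp_all
  then have "(\<Sum>a\<in>A. of_bool (rough w a) * sieve_weight m (n a)) \<le> real (sift A z)"
    unfolding sift_eq_sum_rough[OF assms(1)] by (rule sum_mono)
  then show ?thesis
    using chains[of 1] chains[of 2] chains[of 3] chains[of 4] chains[of 5]
    unfolding sum_mult_sieve_weight sift_eq_sum_rough[OF assms(1), of w] Q_def
    by simp
qed

end
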